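(* Let $M,N,K\ge 1$ be integers, $\mathcal K=\{1,\dots,K\}$, $\mathbf G\in\mathbb C^{N\times M}$, $\mathbf h_1,\dots,\mathbf h_K\in\mathbb C^{M}$, $P_0>0$, and for each $k\in\mathcal K$ let $\Gamma_k>0$ and $\sigma_k^2>0$. Write $\mathbf H_k=\mathbf h_k\mathbf h_k^H$. For a positive semidefinite $\mathbf R\in\mathbb C^{M\times M}$ let $f(\mathbf R)=\mathrm{tr}\big((\mathbf G\mathbf R\mathbf G^H)^{-1}\big)$ when $\mathbf G\mathbf R\mathbf G^H$ is invertible, and $f(\mathbf R)=+\infty$ otherwise. Consider the problems: (P2.1): minimize $f\big(\sum_{k\in\mathcal K}\mathbf w_k\mathbf w_k^H+\mathbf R_0\big)$ over $\mathbf w_1,\dots,\mathbf w_K\in\mathbb C^M$ and Hermitian $\mathbf R_0\in\mathbb C^{M\times M}$, subject to $\frac{|\mathbf h_k^H\mathbf w_k|^2}{\sum_{i\in\mathcal K,i\ne k}|\mathbf h_k^H\mathbf w_i|^2+\sigma_k^2}\ge\Gamma_k$ for all $k\in\mathcal K$, $\sum_{k\in\mathcal K}\|\mathbf w_k\|^2+\mathrm{tr}(\mathbf R_0)\le P_0$, and $\mathbf R_0\succeq\mathbf 0$; (SDR2.1): minimize $f\big(\sum_{k\in\mathcal K}\mathbf W_k+\mathbf R_0\big)$ over Hermitian $\mathbf W_1,\dots,\mathbf W_K,\mathbf R_0\in\mathbb C^{M\times M}$, subject to $\frac{1}{\Gamma_k}\mathrm{tr}(\mathbf H_k\mathbf W_k)-\sum_{i\in\mathcal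 K,i\ne k}\mathrm{tr}(\mathbf H_k\mathbf W_i)\ge\sigma_k^2$ for all $k\in\mathcal K$, $\sum_{k\in\mathcal K}\mathrm{tr}(\mathbf W_k)+\mathrm{tr}(\mathbf R_0)\le P_0$, $\mathbf R_0\succeq\mathbf 0$, and $\mathbf W_k\succeq\mathbf 0$ for all $k\in\mathcal K$. Then (P2.1) and (SDR2.1) have the same optimal value. Moreover, if $\{\bar{\mathbf W}_k\}_{k\in\mathcal K},\bar{\mathbf R}_0$ is an optimal solution of (SDR2.1), then $\mathbf w_k^{\star\star}=(\mathbf h_k^H\bar{\mathbf W}_k\mathbf h_k)^{-1/2}\bar{\mathbf W}_k\mathbf h_k$ for $k\in\mathcal K$ and $\mathbf R_0^{\star\star}=\bar{\mathbf R}_0+\sum_{k\in\mathcal K}\bar{\mathbf W}_k-\sum_{k\in\mathcal K}\mathbf w_k^{\star\star}(\mathbf w_k^{\star\star})^H$ form an optimal solution of (P2.1).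
   Context: This is the transmit beamforming subproblem of an IRS-enabled integrated sensing and communication system with a fixed IRS reflection vector, for users able to pre-cancel the sensing-signal interference: $\mathbf h_k$ is the combined channel from the base station to user $k$, $\mathbf w_k$ the information beamformer, $\mathbf R_0$ the sensing-signal covariance, $\mathbf G$ the base-station-to-IRS channel, $\Gamma_k$ the SINR threshold, $\sigma_k^2$ the noise variance, $P_0$ the power budget. The objective is (up to a positive constant) the Cramér-Rao bound for estimating the target response matrix. *)

theory Defs
  imports "HOL-Analysis.Analysis"
begin

text \<open>Complex matrices are rendered as complex ^'c ^'r (rows 'r, columns 'c);
 dimensions M, N, K are the cardinalities of finite index types.\<close>

definition ctrans :: "complex ^'c ^'r \<Rightarrow> complex ^'r ^'c" where
  "ctrans A = (\<chi> i j. cnj (A $ j $ i))"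

definition mtrace :: "complex ^'n ^'n \<Rightarrow> complex" where
  "mtrace A = (\<Sum>i\<in>UNIV. A $ i $ i)"

definition hermitian :: "complex ^'n ^'n \<Rightarrow> bool" where
  "hermitian A \<longleftrightarrow> ctrans A = A"

definition cinner :: "complex ^'n \<Rightarrow> complex ^'n \<Rightarrow> complex" where
  "cinner h w = (\<Sum>i\<in>UNIV. cnj (h $ i) * w $ i)"

definition outer :: "complex ^'n \<Rightarrow> complex ^'n \<Rightarrow> complex ^'n ^'n" where
  "outer u v = (\<chi> i j. u $ i * cnj (v $ j))"

definition psd :: "complex ^'n ^'n \<Rightarrow> bool" where
  "psd A \<longleftrightarrow> hermitian A \<and> (\<forall>x. Re (cinner x (A *v x)) \<ge> 0)"

definition crb :: "complex ^'m ^'n \<Rightarrow> complex ^'m ^'m \<Rightarrow> ereal" where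
  "crb G R = (if invertible (G ** R ** ctrans G)
              then ereal (Re (mtrace (matrix_inv (G ** R ** ctrans G)))) else \<infinity>)"

definition feasP :: "('k::finite \<Rightarrow> complex ^'m) \<Rightarrow> ('k \<Rightarrow> real) \<Rightarrow> ('k \<Rightarrow> real) \<Rightarrow> real
   \<Rightarrow> ('k \<Rightarrow> complex ^'m) \<Rightarrow> complex ^'m ^'m \<Rightarrow> bool" where
  "feasP h Gam sigma2 P0 w R0 \<longleftrightarrow>
     (\<forall>k. (cmod (cinner (h k) (w k)))\<^sup>2 /
           ((\<Sum>i\<in>UNIV - {k}. (cmod (cinner (h k) (w i)))\<^sup>2) + sigma2 k) \<ge> Gam k) \<and>
     (\<Sum>k\<in>UNIV. (norm (w k))\<^sup>2) + Re (mtrace R0) \<le> P0 \<and>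
     hermitian R0 \<and> psd R0"

definition objP :: "complex ^'m ^'n \<Rightarrow> ('k::finite \<Rightarrow> complex ^'m) \<Rightarrow> complex ^'m ^'m \<Rightarrow> ereal" where
  "objP G w R0 = crb G ((\<Sum>k\<in>UNIV. outer (w k) (w k)) + R0)"

definition feasS :: "('k::finite \<Rightarrow> complex ^'m) \<Rightarrow> ('k \<Rightarrow> real) \<Rightarrow> ('k \<Rightarrow> real) \<Rightarrow> real
   \<Rightarrow> ('k \<Rightarrow> complex ^'m ^'m) \<Rightarrow> complex ^'m ^'m \<Rightarrow> bool" where
  "feasS h Gam sigma2 P0 W R0 \<longleftrightarrow>
     (\<forall>k. hermitian (W k)) \<and> hermitian R0 \<and>
     (\<forall>k. Re (mtrace (outer (h k) (h k) ** W k)) / Gam k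
          - (\<Sum>i\<in>UNIV - {k}. Re (mtrace (outer (h k) (h k) ** W i))) \<ge> sigma2 k) \<and>
     (\<Sum>k\<in>UNIV. Re (mtrace (W k))) + Re (mtrace R0) \<le> P0 \<and>
     psd R0 \<and> (\<forall>k. psd (W k))"

definition objS :: "complex ^'m ^'n \<Rightarrow> ('k::finite \<Rightarrow> complex ^'m ^'m) \<Rightarrow> complex ^'m ^'m \<Rightarrow> ereal" where
  "objS G W R0 = crb G ((\<Sum>k\<in>UNIV. W k) + R0)"

end

theory Submission
  imports Defs
begin

text \<open>A beamformer \<open>w\<^sub>k\<close> gives the feasible SDR point
  \<open>W\<^sub>k = w\<^sub>k w\<^sub>k\<^sup>H\<close> with the same total covariance. Conversely, from a feasible
  \<open>W\<^sub>k \<succeq> 0\<close> the beam \<open>w\<^sub>k = W\<^sub>k h\<^sub>k / (h\<^sub>k\<^sup>H W\<^sub>k h\<^sub>k)\<^sup>1\<^sup>/\<^sup>2\<close> keeps the signal power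
  \<open>|h\<^sub>k\<^sup>H w\<^sub>k|\<^sup>2 = h\<^sub>k\<^sup>H W\<^sub>k h\<^sub>k\<close>, and by the Cauchy-Schwarz inequality for the form of
  \<open>W\<^sub>k\<close> it leaks at most \<open>|h\<^sub>j\<^sup>H w\<^sub>k|\<^sup>2 \<le> h\<^sub>j\<^sup>H W\<^sub>k h\<^sub>j\<close> to the other users, and
  \<open>W\<^sub>k - w\<^sub>k w\<^sub>k\<^sup>H \<succeq> 0\<close>. Moving these remainders into \<open>R\<^sub>0\<close> preserves the total
  covariance, hence the objective and the power, and the SINR constraints become the SDR
  constraints. So both problems have feasible points of equal value mapped onto each other,
  their infima agree, and optimal SDR points are sent to optimal beamformers.\<close>

lemma cinner_add_right: "cinner x (y + z) = cinner x y + cinner x z"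
  by (simp add: cinner_def algebra_simps sum.distrib)

lemma cinner_diff_right: "cinner x (y - z) = cinner x y - cinner x z"
  by (simp add: cinner_def algebra_simps sum_subtractf)

lemma cinner_diff_left: "cinner (x - y) z = cinner x z - cinner y z"
  by (simp add: cinner_def algebra_simps sum_subtractf)

lemma cinner_scale_right: "cinner x (c *s y) = c * cinner x y"
  by (simp add: cinner_def algebra_simps sum_distrib_left)

lemma cinner_scale_left: "cinner (c *s x) y = cnj c * cinner x y"
  by (simp add: cinner_def algebra_simps sum_distrib_left)

lemma cinner_commute: "cinner y x = cnj (cinner x y)"
  by (simp add: cinner_def mult.commute)

lemma cnj_mult_self: "cnj z * z = complex_of_real ((cmod z)\<^sup>2)"
  by (metis complex_norm_square mult.commute)

lemma cinner_self: "cinner x x = complex_of_real ((norm x)\<^sup>2)"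
proof -
  have "cinner x x = complex_of_real (\<Sum>i\<in>UNIV. (cmod (x $ i))\<^sup>2)"
    by (simp only: cinner_def cnj_mult_self of_real_sum)
  also have "(\<Sum>i\<in>UNIV. (cmod (x $ i))\<^sup>2) = (norm x)\<^sup>2"
    by (simp add: norm_vec_def L2_set_def sum_nonneg)
  finally show ?thesis .
qed

lemma outer_mult_vector: "outer u v *v x = cinner v x *s u"
  by (simp add: outer_def cinner_def matrix_vector_mult_def vec_eq_iff sum_distrib_left algebra_simps)

lemma cinner_outer_self: "cinner x (outer w w *v x) = complex_of_real ((cmod (cinner x w))\<^sup>2)"
  by (simp add: outer_mult_vector cinner_scale_right cinner_commute[of w x] cnj_mult_self)

lemma mtrace_add: "mtrace (A + B) = mtrace A + mtrace B"
  by (simp add: mtrace_def sum.distrib)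

lemma mtrace_diff: "mtrace (A - B) = mtrace A - mtrace B"
  by (simp add: mtrace_def sum_subtractf)

lemma mtrace_sum: "mtrace (\<Sum>k\<in>S. A k) = (\<Sum>k\<in>S. mtrace (A k))"
  by (simp add: mtrace_def sum_component sum.swap[of _ S])

lemma mtrace_outer_self: "mtrace (outer w w) = complex_of_real ((norm w)\<^sup>2)"
  using cinner_self[of w] by (simp add: mtrace_def outer_def cinner_def mult.commute)

lemma mtrace_outer_mult: "mtrace (outer h h ** W) = cinner h (W *v h)"
proof -
  have "mtrace (outer h h ** W) = (\<Sum>i\<in>UNIV. \<Sum>j\<in>UNIV. h $ i * cnj (h $ j) * W $ j $ i)"
    by (simp add: mtrace_def outer_def matrix_matrix_mult_def)
  also have "\<dots> = (\<Sum>j\<in>UNIV. \<Sum>i\<in>UNIV. cnj (h $ j) * (W $ j $ i * h $ i))"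
    by (subst sum.swap) (simp add: mult_ac)
  finally show ?thesis
    by (simp add: cinner_def matrix_vector_mult_def sum_distrib_left)
qed

lemma hermitian_add: "hermitian A \<Longrightarrow> hermitian B \<Longrightarrow> hermitian (A + B)"
  by (simp add: hermitian_def ctrans_def vec_eq_iff)

lemma hermitian_diff: "hermitian A \<Longrightarrow> hermitian B \<Longrightarrow> hermitian (A - B)"
  by (simp add: hermitian_def ctrans_def vec_eq_iff)

lemma hermitian_outer_self: "hermitian (outer w w)"
  by (simp add: hermitian_def ctrans_def outer_def vec_eq_iff mult.commute)

lemma hermitian_cinner_swap:
  assumes "hermitian A"
  shows "cinner y (A *v x) = cnj (cinner x (A *v y))"
proof -
  have entry: "cnj (A $ j $ i) = A $ i $ j" for i j
    using arg_cong[OF assms[unfolded hermitian_def], of "\<lambda>B. B $ i $ j"] by (simp add: ctrans_def)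
  have "cnj (cinner x (A *v y)) = (\<Sum>j\<in>UNIV. \<Sum>i\<in>UNIV. x $ j * cnj (A $ j $ i) * cnj (y $ i))"
    by (simp add: cinner_def matrix_vector_mult_def sum_distrib_left mult_ac)
  also have "\<dots> = (\<Sum>i\<in>UNIV. \<Sum>j\<in>UNIV. cnj (y $ i) * (A $ i $ j * x $ j))"
    by (subst sum.swap) (simp add: entry mult_ac)
  finally show ?thesis
    by (simp add: cinner_def matrix_vector_mult_def sum_distrib_left)
qed

lemma hermitian_quadratic_form_real:
  "hermitian A \<Longrightarrow> cinner x (A *v x) = complex_of_real (Re (cinner x (A *v x)))"
  by (metis hermitian_cinner_swap Reals_cnj_iff of_real_Re)

lemma psd_zero: "psd (0::complex ^'n ^'n)"
  by (simp add: psd_def hermitian_def ctrans_def cinner_def vec_eq_iff)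

lemma psd_add: "psd A \<Longrightarrow> psd B \<Longrightarrow> psd (A + B)"
  by (auto simp: psd_def hermitian_add matrix_vector_mult_add_rdistrib cinner_add_right)

lemma psd_sum: "(\<And>k. k \<in> S \<Longrightarrow> psd (A k)) \<Longrightarrow> psd (\<Sum>k\<in>S. A k)"
  by (induction S rule: infinite_finite_induct) (auto simp: psd_zero psd_add)

lemma psd_outer_self: "psd (outer w w)"
  by (simp add: psd_def hermitian_outer_self cinner_outer_self)

lemma psd_cauchy_schwarz:
  assumes "psd A" and pos: "Re (cinner y (A *v y)) > 0"
  shows "(cmod (cinner x (A *v y)))\<^sup>2 / Re (cinner y (A *v y)) \<le> Re (cinner x (A *v x))"
proof -
  define b where "b = Re (cinner y (A *v y))"
  define p where "p = cinner x (A *v y)"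
  define c where "c = cnj p / complex_of_real b"
  have herm: "hermitian A" using assms(1) by (simp add: psd_def)
  have yx: "cinner y (A *v x) = cnj p"
    unfolding p_def by (rule hermitian_cinner_swap[OF herm])
  have yy: "cinner y (A *v y) = complex_of_real b"
    unfolding b_def by (rule hermitian_quadratic_form_real[OF herm])
  have "b > 0" using pos by (simp add: b_def)
  then have cp: "c * p = complex_of_real ((cmod p)\<^sup>2 / b)"
    by (simp add: c_def cnj_mult_self)
  have cc: "cnj c * c * complex_of_real b = complex_of_real ((cmod p)\<^sup>2 / b)"
  proof -
    have "cnj c * c * complex_of_real b = complex_of_real ((cmod p / b)\<^sup>2 * b)"
      using \<open>b > 0\<close> by (simp only: cnj_mult_self c_def norm_divide) simp
    also have "(cmod p / b)\<^sup>2 * b = (cmod p)\<^sup>2 / b"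
      using \<open>b > 0\<close> by (simp add: power2_eq_square)
    finally show ?thesis .
  qed
  \<comment> \<open>Expand the nonnegative form at the residual \<open>x - c y\<close> of projecting \<open>x\<close> onto \<open>y\<close>.\<close>
  have "cinner (x - c *s y) (A *v (x - c *s y))
      = cinner x (A *v x) - (c * p + cnj (c * p) - cnj c * c * complex_of_real b)"
    unfolding matrix_vector_mult_diff_distrib vector_scalar_commute cinner_diff_left
      cinner_diff_right cinner_scale_left cinner_scale_right yx yy p_def[symmetric]
    by (simp add: algebra_simps)
  also have "\<dots> = cinner x (A *v x) - complex_of_real ((cmod p)\<^sup>2 / b)"
    by (simp add: cp cc)
  finally have "0 \<le> Re (cinner x (A *v x)) - (cmod p)\<^sup>2 / b"
    using assms(1) unfolding psd_def by (metis minus_complex.sel Re_complex_of_real)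
  then show ?thesis by (simp add: b_def p_def)
qed

definition rank_one_beam :: "complex ^'n ^'n \<Rightarrow> complex ^'n \<Rightarrow> complex ^'n" where
  "rank_one_beam W h = complex_of_real (1 / sqrt (Re (cinner h (W *v h)))) *s (W *v h)"

lemma cmod_cinner_rank_one_beam:
  assumes "Re (cinner h (W *v h)) > 0"
  shows "(cmod (cinner x (rank_one_beam W h)))\<^sup>2
           = (cmod (cinner x (W *v h)))\<^sup>2 / Re (cinner h (W *v h))"
  using assms by (simp add: rank_one_beam_def cinner_scale_right norm_mult power_mult_distrib
      norm_divide power_divide)

lemma rank_one_beam_gain:
  assumes "hermitian W" and "Re (cinner h (W *v h)) > 0"
  shows "(cmod (cinner h (rank_one_beam W h)))\<^sup>2 = Re (cinner h (W *v h))"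
  using assms(2) unfolding cmod_cinner_rank_one_beam[OF assms(2)]
  by (subst hermitian_quadratic_form_real[OF assms(1)]) (simp add: power2_eq_square)

lemma rank_one_beam_leakage_le:
  assumes "psd W" and "Re (cinner h (W *v h)) > 0"
  shows "(cmod (cinner g (rank_one_beam W h)))\<^sup>2 \<le> Re (cinner g (W *v g))"
  unfolding cmod_cinner_rank_one_beam[OF assms(2)] by (rule psd_cauchy_schwarz[OF assms])

lemma psd_diff_outer_rank_one_beam:
  assumes "psd W" and "Re (cinner h (W *v h)) > 0"
  shows "psd (W - outer (rank_one_beam W h) (rank_one_beam W h))"
  using rank_one_beam_leakage_le[OF assms] assms(1)
  by (simp add: psd_def hermitian_diff hermitian_outer_self matrix_vector_mult_diff_rdistrib
      cinner_diff_right cinner_outer_self)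

lemma sinr_ge_iff:
  fixes s I sigma Gam :: real
  assumes "Gam > 0" and "I + sigma > 0"
  shows "Gam \<le> s / (I + sigma) \<longleftrightarrow> sigma \<le> s / Gam - I"
proof -
  have "sigma \<le> s / Gam - I \<longleftrightarrow> (I + sigma) * Gam \<le> s"
    using assms(1) by (simp add: pos_le_divide_eq algebra_simps)
  then show ?thesis
    using assms by (simp add: pos_le_divide_eq mult.commute)
qed

lemma Re_mtrace_outer_mult_outer_self:
  "Re (mtrace (outer h h ** outer w w)) = (cmod (cinner h w))\<^sup>2"
  by (simp add: mtrace_outer_mult cinner_outer_self)

lemma feasS_outer_self_if_feasP:
  assumes "\<And>k. Gam k > 0" and "\<And>k. sigma2 k > 0" and "feasP h Gam sigma2 P0 w R0"
  shows "feasS h Gam sigma2 P0 (\<lambda>k. outer (w k) (w k)) R0"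
proof -
  have "sigma2 k \<le> (cmod (cinner (h k) (w k)))\<^sup>2 / Gam k
          - (\<Sum>i\<in>UNIV - {k}. (cmod (cinner (h k) (w i)))\<^sup>2)" for k
  proof -
    have "(\<Sum>i\<in>UNIV - {k}. (cmod (cinner (h k) (w i)))\<^sup>2) + sigma2 k > 0"
      using assms(2)[of k] by (simp add: add_nonneg_pos sum_nonneg)
    moreover have "Gam k \<le> (cmod (cinner (h k) (w k)))\<^sup>2
                     / ((\<Sum>i\<in>UNIV - {k}. (cmod (cinner (h k) (w i)))\<^sup>2) + sigma2 k)"
      using assms(3) by (simp add: feasP_def)
    ultimately show ?thesis
      using sinr_ge_iff[OF assms(1)[of k]] by blast
  qed
  then show ?thesis
    using assms(3) by (simp add: feasS_def feasP_def Re_mtrace_outer_mult_outer_self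
        mtrace_outer_self hermitian_outer_self psd_outer_self)
qed

lemma feasS_gain_pos:
  assumes "\<And>k. Gam k > 0" and "\<And>k. sigma2 k > 0" and "feasS h Gam sigma2 P0 W R0"
  shows "Re (cinner (h k) (W k *v h k)) > 0"
proof -
  have "Re (cinner (h k) (W k *v h k)) / Gam k
          - (\<Sum>i\<in>UNIV - {k}. Re (cinner (h k) (W i *v h k))) \<ge> sigma2 k"
    using assms(3) by (simp add: feasS_def mtrace_outer_mult)
  moreover have "(\<Sum>i\<in>UNIV - {k}. Re (cinner (h k) (W i *v h k))) \<ge> 0"
    using assms(3) by (intro sum_nonneg) (simp add: feasS_def psd_def)
  ultimately have "Re (cinner (h k) (W k *v h k)) / Gam k > 0"
    using assms(2)[of k] by linarith
  then show ?thesis using assms(1)[of k] by (simp add: zero_less_divide_iff)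
qed

lemma feasP_rank_one_beam_if_feasS:
  assumes "\<And>k. Gam k > 0" and "\<And>k. sigma2 k > 0" and "feasS h Gam sigma2 P0 W R0"
  defines "w \<equiv> \<lambda>k. rank_one_beam (W k) (h k)"
  shows "feasP h Gam sigma2 P0 w (R0 + (\<Sum>k\<in>UNIV. W k) - (\<Sum>k\<in>UNIV. outer (w k) (w k)))"
proof -
  have gain: "Re (cinner (h k) (W k *v h k)) > 0" for k
    using feasS_gain_pos[OF assms(1-3)] .
  have psdW: "psd (W k)" for k
    using assms(3) by (simp add: feasS_def)
  have sinr: "Gam k \<le> (cmod (cinner (h k) (w k)))\<^sup>2 /
                ((\<Sum>i\<in>UNIV - {k}. (cmod (cinner (h k) (w i)))\<^sup>2) + sigma2 k)" for k
  proof -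
    have "(\<Sum>i\<in>UNIV - {k}. (cmod (cinner (h k) (w i)))\<^sup>2)
            \<le> (\<Sum>i\<in>UNIV - {k}. Re (cinner (h k) (W i *v h k)))"
      unfolding w_def by (intro sum_mono rank_one_beam_leakage_le psdW gain)
    moreover have "sigma2 k \<le> Re (cinner (h k) (W k *v h k)) / Gam k
                     - (\<Sum>i\<in>UNIV - {k}. Re (cinner (h k) (W i *v h k)))"
      using assms(3) by (simp add: feasS_def mtrace_outer_mult)
    ultimately show ?thesis
      using sinr_ge_iff[OF assms(1)[of k]] assms(2)[of k]
      by (simp add: w_def rank_one_beam_gain psdW[unfolded psd_def] gain add_nonneg_pos sum_nonneg)
  qed
  have "psd (R0 + (\<Sum>k\<in>UNIV. W k - outer (w k) (w k)))"
    using assms(3) unfolding w_def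
    by (intro psd_add psd_sum psd_diff_outer_rank_one_beam psdW gain) (simp add: feasS_def)
  then have "psd (R0 + (\<Sum>k\<in>UNIV. W k) - (\<Sum>k\<in>UNIV. outer (w k) (w k)))"
    by (simp add: sum_subtractf add_diff_eq)
  then show ?thesis
    using assms(3) sinr
    by (simp add: feasP_def feasS_def psd_def mtrace_add mtrace_diff mtrace_sum mtrace_outer_self)
qed

lemma objP_add_diff_outer:
  "objP G w (R0 + (\<Sum>k\<in>UNIV. W k) - (\<Sum>k\<in>UNIV. outer (w k) (w k))) = objS G W R0"
  by (simp add: objP_def objS_def algebra_simps)

lemma objS_outer_self: "objS G (\<lambda>k. outer (w k) (w k)) R0 = objP G w R0"
  by (simp add: objS_def objP_def)

lemma INF_eq_if_value_preserving_maps: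
  fixes u :: "'a \<Rightarrow> 'c::complete_lattice"
  assumes "\<And>x. x \<in> A \<Longrightarrow> f x \<in> B \<and> v (f x) = u x"
    and "\<And>y. y \<in> B \<Longrightarrow> g y \<in> A \<and> u (g y) = v y"
  shows "(INF x\<in>A. u x) = (INF y\<in>B. v y)"
  by (rule antisym; rule INF_mono) (metis assms order_refl)+

theorem proposition2:
  fixes G :: "complex ^'m ^'n"
    and h :: "'k::finite \<Rightarrow> complex ^'m"
    and Gam sigma2 :: "'k \<Rightarrow> real"
    and P0 :: real
  assumes "P0 > 0" and "\<And>k. Gam k > 0" and "\<And>k. sigma2 k > 0"
  shows "(INF p \<in> {(w, R0). feasP h Gam sigma2 P0 w R0}. objP G (fst p) (snd p))
           = (INF p \<in> {(W, R0). feasS h Gam sigma2 P0 W R0}. objS G (fst p) (snd p))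
         \<and> (\<forall>Wb Rb. feasS h Gam sigma2 P0 Wb Rb \<longrightarrow>
             objS G Wb Rb = (INF p \<in> {(W, R0). feasS h Gam sigma2 P0 W R0}. objS G (fst p) (snd p)) \<longrightarrow>
             (let ws = (\<lambda>k. complex_of_real (1 / sqrt (Re (cinner (h k) (Wb k *v h k)))) *s (Wb k *v h k));
                  Rs = Rb + (\<Sum>k\<in>UNIV. Wb k) - (\<Sum>k\<in>UNIV. outer (ws k) (ws k))
              in feasP h Gam sigma2 P0 ws Rs \<and>
                 objP G ws Rs = (INF p \<in> {(w, R0). feasP h Gam sigma2 P0 w R0}. objP G (fst p) (snd p))))"
proof -
  let ?IP = "INF p \<in> {(w, R0). feasP h Gam sigma2 P0 w R0}. objP G (fst p) (snd p)"
  let ?IS = "INF p \<in> {(W, R0). feasS h Gam sigma2 P0 W R0}. objS G (fst p) (snd p)"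
  let ?w = "\<lambda>W k. rank_one_beam (W k) (h k)"
  let ?R = "\<lambda>W R0. R0 + (\<Sum>k\<in>UNIV. W k) - (\<Sum>k\<in>UNIV. outer (?w W k) (?w W k))"
  have recover: "feasP h Gam sigma2 P0 (?w W) (?R W R0) \<and> objP G (?w W) (?R W R0) = objS G W R0"
    if "feasS h Gam sigma2 P0 W R0" for W R0
    using feasP_rank_one_beam_if_feasS[of Gam sigma2, OF assms(2,3) that] objP_add_diff_outer by blast
  have relax: "feasS h Gam sigma2 P0 (\<lambda>k. outer (w k) (w k)) R0 \<and>
                 objS G (\<lambda>k. outer (w k) (w k)) R0 = objP G w R0"
    if "feasP h Gam sigma2 P0 w R0" for w R0
    using feasS_outer_self_if_feasP[of Gam sigma2, OF assms(2,3) that] objS_outer_self by blast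
  have "?IP = ?IS"
    by (rule INF_eq_if_value_preserving_maps[where f = "\<lambda>(w, R0). (\<lambda>k. outer (w k) (w k), R0)"
          and g = "\<lambda>(W, R0). (?w W, ?R W R0)"])
      (auto simp: relax recover)
  then show ?thesis
    unfolding Let_def rank_one_beam_def[symmetric] using recover by simp
qed

end
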